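(* Let $\chi_k$ be a sequence of irrigation patterns converging uniformly to an irrigation pattern $\chi$, and let $t_k\in I$ with $t_k\to t$. Then for $\mathbb P$-almost all $p\in\Gamma$, $$m_\chi(\chi(p,t))\ge\limsup_{k\to\infty}m_{\chi_k}(\chi_k(p,t_k)).$$
   Context: A reference space $(\Gamma,\mathcal B(\Gamma),\mathbb P)$ is a complete separable uncountable metric space with a positive finite atomless Borel measure $\mathbb P$. $I=[0,1]$. An irrigation pattern is a measurable $\chi:\Gamma\times I\to\mathbb{R}^n$ with $\chi_p=\chi(p,\cdot)$ absolutely continuous for $\mathbb P$-a.e. $p$. $\chi_k\to\chi$ uniformly means $\chi_k(p,\cdot)\to\chi(p,\cdot)$ uniformly on $I$ for $\mathbb P$-a.e. $p$. $m_\chi(x)=\mathbb P(\{q\in\Gamma:x\in\chi_q(I)\})$. *)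

theory Defs
  imports "HOL-Analysis.Analysis"
begin

definition abs_cont_on :: "real \<Rightarrow> real \<Rightarrow> (real \<Rightarrow> 'b::real_normed_vector) \<Rightarrow> bool" where
  "abs_cont_on a b f \<longleftrightarrow>
     (\<forall>e>0. \<exists>d>0. \<forall>(n::nat) (u::nat \<Rightarrow> real) (v::nat \<Rightarrow> real).
        (\<forall>i<n. a \<le> u i \<and> u i \<le> v i \<and> v i \<le> b) \<and>
        (\<forall>i<n. \<forall>j<n. i \<noteq> j \<longrightarrow> v i \<le> u j \<or> v j \<le> u i) \<and>
        (\<Sum>i<n. v i - u i) < d
        \<longrightarrow> (\<Sum>i<n. norm (f (v i) - f (u i))) < e)"

definition atomless :: "'a measure \<Rightarrow> bool" where
  "atomless M \<longleftrightarrow> (\<forall>A\<in>sets M. emeasure M A > 0 \<longrightarrow>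
      (\<exists>B\<in>sets M. B \<subseteq> A \<and> 0 < emeasure M B \<and> emeasure M B < emeasure M A))"

definition reference_space :: "('a::polish_space) measure \<Rightarrow> bool" where
  "reference_space P \<longleftrightarrow> uncountable (UNIV :: 'a set) \<and> sets P = sets borel \<and>
     finite_measure P \<and> emeasure P (space P) > 0 \<and> atomless P"

definition irrigation_pattern :: "('a::polish_space) measure \<Rightarrow> ('a \<Rightarrow> real \<Rightarrow> 'b::euclidean_space) \<Rightarrow> bool" where
  "irrigation_pattern P X \<longleftrightarrow>
     (\<lambda>z. X (fst z) (snd z)) \<in> borel_measurable (borel \<Otimes>\<^sub>M restrict_space borel {0..1}) \<and>
     (AE p in P. abs_cont_on 0 1 (X p))"

definition pattern_unif_conv :: "('a::polish_space) measure \<Rightarrow> (nat \<Rightarrow> 'a \<Rightarrow> real \<Rightarrow> 'b::euclidean_space) \<Rightarrow> ('a \<Rightarrow> real \<Rightarrow> 'b) \<Rightarrow> bool" where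
  "pattern_unif_conv P Xs X \<longleftrightarrow>
     (AE p in P. uniform_limit {0..1} (\<lambda>k. Xs k p) (X p) sequentially)"

text \<open>Multiplicity m_chi(x) = P({q. x in chi_q(I)}); the set is measured in the completion of P
  (it is the projection of a Borel set, hence universally measurable).\<close>
definition multiplicity_pat :: "('a::polish_space) measure \<Rightarrow> ('a \<Rightarrow> real \<Rightarrow> 'b) \<Rightarrow> 'b \<Rightarrow> real" where
  "multiplicity_pat P X x = measure (completion P) {q \<in> space P. x \<in> X q ` {0..1}}"

end

theory Submission
  imports Defs
begin

text \<open>Since the curves \<open>\<chi>\<^sub>k(q,\<cdot>)\<close> converge uniformly to the continuous curve \<open>\<chi>(q,\<cdot>)\<close> and
  \<open>\<chi>\<^sub>k(p,t\<^sub>k) \<rightarrow> \<chi>(p,t)\<close>, every fibre \<open>q\<close> that passes through \<open>\<chi>\<^sub>k(p,t\<^sub>k)\<close> for infinitely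
  many \<open>k\<close> passes through \<open>\<chi>(p,t)\<close>, because its image is compact. So the limsup of the sets
  counted by \<open>m\<^sub>\<chi>\<^sub>k\<close> is a.e. contained in the set counted by \<open>m\<^sub>\<chi>\<close>, and the reverse Fatou
  inequality for the finite measure \<open>\<bbbP>\<close> gives the claim.\<close>

lemma abs_cont_on_imp_continuous_on:
  fixes f :: "real \<Rightarrow> 'b::real_normed_vector"
  assumes "abs_cont_on a b f"
  shows "continuous_on {a..b} f"
proof -
  have "uniformly_continuous_on {a..b} f"
    unfolding uniformly_continuous_on_def
  proof (intro allI impI)
    fix e :: real assume "e > 0"
    then obtain d where "d > 0" and d: "\<And>(n::nat) (u::nat \<Rightarrow> real) v.
        (\<forall>i<n. a \<le> u i \<and> u i \<le> v i \<and> v i \<le> b) \<and>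
        (\<forall>i<n. \<forall>j<n. i \<noteq> j \<longrightarrow> v i \<le> u j \<or> v j \<le> u i) \<and>
        (\<Sum>i<n. v i - u i) < d
        \<longrightarrow> (\<Sum>i<n. norm (f (v i) - f (u i))) < e"
      using assms unfolding abs_cont_on_def by blast
    show "\<exists>d>0. \<forall>x\<in>{a..b}. \<forall>x'\<in>{a..b}. dist x' x < d \<longrightarrow> dist (f x') (f x) < e"
    proof (intro exI[of _ d] conjI ballI impI \<open>d > 0\<close>)
      fix x x' assume "x \<in> {a..b}" "x' \<in> {a..b}" "dist x' x < d"
      then have "norm (f (max x x') - f (min x x')) < e"
        using d[of 1 "\<lambda>_. min x x'" "\<lambda>_. max x x'"] by (auto simp: dist_real_def)
      then show "dist (f x') (f x) < e"
        by (cases "x \<le> x'") (auto simp: dist_norm norm_minus_commute)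
    qed
  qed
  then show ?thesis
    by (rule uniformly_continuous_imp_continuous)
qed

lemma exists_rat_near:
  fixes s :: real
  assumes "a < b" "s \<in> {a..b}" "d > 0"
  obtains r :: rat where "real_of_rat r \<in> {a..b}" "dist (real_of_rat r) s < d"
proof -
  have "max a (s - d) < min b (s + d)"
    using assms by auto
  then obtain q where "q \<in> \<rat>" "max a (s - d) < q" "q < min b (s + d)"
    using Rats_dense_in_real by blast
  moreover from \<open>q \<in> \<rat>\<close> obtain r where "q = real_of_rat r"
    by (auto simp: Rats_def)
  ultimately show ?thesis
    using that[of r] by (auto simp: dist_real_def)
qed

text \<open>Replaces the uncountable union over parameters by a countable one; this is where the
  measurability of the sets counted by the multiplicity comes from.\<close>
lemma mem_image_iff_rational_approx:
  fixes f :: "real \<Rightarrow> 'b::metric_space"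
  assumes "a < b" and f: "continuous_on {a..b} f"
  shows "x \<in> f ` {a..b} \<longleftrightarrow>
     (\<forall>n::nat. \<exists>r\<in>{r. real_of_rat r \<in> {a..b}}. dist (f (real_of_rat r)) x < 1 / Suc n)"
    (is "_ \<longleftrightarrow> (\<forall>n. ?near n)")
proof
  assume "x \<in> f ` {a..b}"
  then obtain s where s: "s \<in> {a..b}" "x = f s"
    by auto
  show "\<forall>n. ?near n"
  proof
    fix n :: nat
    obtain d where "d > 0" and d: "\<And>y. y \<in> {a..b} \<Longrightarrow> dist y s < d \<Longrightarrow> dist (f y) (f s) < 1 / Suc n"
      using f s(1) unfolding continuous_on_iff by (metis of_nat_0_less_iff zero_less_Suc zero_less_divide_1_iff)
    obtain r where "real_of_rat r \<in> {a..b}" "dist (real_of_rat r) s < d"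
      using exists_rat_near[OF \<open>a < b\<close> s(1) \<open>d > 0\<close>] .
    then show "?near n"
      using d s(2) by blast
  qed
next
  assume near: "\<forall>n. ?near n"
  have "x \<in> closure (f ` {a..b})"
    unfolding closure_approachable
  proof (intro allI impI)
    fix e :: real assume "e > 0"
    then obtain n :: nat where "1 / Suc n < e"
      by (metis nat_approx_posE)
    moreover obtain r where "real_of_rat r \<in> {a..b}" "dist (f (real_of_rat r)) x < 1 / Suc n"
      using near by blast
    ultimately show "\<exists>y\<in>f ` {a..b}. dist y x < e"
      by force
  qed
  moreover have "closed (f ` {a..b})"
    by (intro compact_imp_closed compact_continuous_image f compact_Icc)
  ultimately show "x \<in> f ` {a..b}"
    by (simp add: closure_closed)
qed

lemma irrigation_pattern_measurable_at:
  assumes "sets P = sets borel" "irrigation_pattern P Y" "s \<in> {0..1}"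
  shows "(\<lambda>q. Y q s) \<in> borel_measurable P"
proof -
  have "(\<lambda>q. (q, s)) \<in> borel \<rightarrow>\<^sub>M (borel \<Otimes>\<^sub>M restrict_space (borel::real measure) {0..1})"
    using assms(3) by (intro measurable_Pair measurable_ident_sets measurable_const)
      (auto simp: space_restrict_space)
  moreover have "(\<lambda>z. Y (fst z) (snd z)) \<in> borel_measurable (borel \<Otimes>\<^sub>M restrict_space borel {0..1})"
    using assms(2) unfolding irrigation_pattern_def by blast
  ultimately have "(\<lambda>q. Y q s) \<in> borel_measurable borel"
    by (auto dest: measurable_comp simp: o_def)
  then show ?thesis
    using measurable_cong_sets[OF assms(1) refl] by blast
qed

lemma irrigation_pattern_fibres_through_sets_completion:
  fixes Y :: "'a::polish_space \<Rightarrow> real \<Rightarrow> 'b::euclidean_space"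
  assumes sP: "sets P = sets borel" and Y: "irrigation_pattern P Y"
  shows "{q \<in> space P. x \<in> Y q ` {0..1}} \<in> sets (completion P)"
proof -
  let ?near = "\<lambda>q. \<forall>n::nat. \<exists>r\<in>{r. real_of_rat r \<in> {0..1}}. dist (Y q (real_of_rat r)) x < 1 / Suc n"
  have "Measurable.pred P ?near"
    using irrigation_pattern_measurable_at[OF sP Y] by measurable
  then have near_sets: "{q \<in> space P. ?near q} \<in> sets (completion P)"
    by (simp add: pred_def)
  have "AE q in P. abs_cont_on 0 1 (Y q)"
    using Y unfolding irrigation_pattern_def by blast
  with AE_space have "AE q in P. q \<in> {q \<in> space P. ?near q} \<longleftrightarrow> q \<in> {q \<in> space P. x \<in> Y q ` {0..1}}"
    by eventually_elim (simp add: mem_image_iff_rational_approx abs_cont_on_imp_continuous_on)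
  then have "AE q in completion P. q \<in> {q \<in> space P. ?near q} \<longleftrightarrow> q \<in> {q \<in> space P. x \<in> Y q ` {0..1}}"
    by (rule AE_completion)
  from completion.in_sets_AE[OF this near_sets] show ?thesis
    by auto
qed

lemma tendsto_uniform_limit_compose:
  fixes f :: "'i \<Rightarrow> 'a::topological_space \<Rightarrow> 'b::metric_space"
  assumes "uniform_limit S f g F" "continuous_on S g"
    and "(t \<longlongrightarrow> t0) F" "\<forall>\<^sub>F k in F. t k \<in> S" "t0 \<in> S"
  shows "((\<lambda>k. f k (t k)) \<longlongrightarrow> g t0) F"
proof (rule tendstoI)
  fix e :: real assume "e > 0"
  have "((\<lambda>k. g (t k)) \<longlongrightarrow> g t0) F"
    using assms(2,3,5,4) by (rule continuous_on_tendsto_compose)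
  then have "\<forall>\<^sub>F k in F. dist (g (t k)) (g t0) < e / 2"
    using \<open>e > 0\<close> half_gt_zero tendstoD by blast
  moreover have "\<forall>\<^sub>F k in F. \<forall>s\<in>S. dist (f k s) (g s) < e / 2"
    using assms(1) \<open>e > 0\<close> half_gt_zero uniform_limitD by blast
  ultimately show "\<forall>\<^sub>F k in F. dist (f k (t k)) (g t0) < e"
    using assms(4) by eventually_elim (metis dist_commute dist_triangle_half_l)
qed

lemma mem_image_if_frequently_mem_image_uniform_limit:
  fixes f :: "'i \<Rightarrow> 'a::topological_space \<Rightarrow> 'b::metric_space"
  assumes "compact S" "continuous_on S g" "uniform_limit S f g F"
    and "(x \<longlongrightarrow> x0) F" "\<exists>\<^sub>F k in F. x k \<in> f k ` S"
  shows "x0 \<in> g ` S"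
proof -
  have "x0 \<in> closure (g ` S)"
    unfolding closure_approachable
  proof (intro allI impI)
    fix e :: real assume "e > 0"
    have "\<forall>\<^sub>F k in F. dist (x k) x0 < e / 2 \<and> (\<forall>s\<in>S. dist (f k s) (g s) < e / 2)"
      using tendstoD[OF assms(4)] uniform_limitD[OF assms(3)] half_gt_zero[OF \<open>e > 0\<close>]
      by (intro eventually_conj)
    then obtain k s where "s \<in> S" "x k = f k s" "dist (x k) x0 < e / 2" "dist (f k s) (g s) < e / 2"
      using frequently_ex[OF frequently_eventually_frequently[OF assms(5)]] by blast
    then have "dist (g s) x0 < e"
      using dist_triangle_half_l[of "g s" "f k s" e x0] by (simp add: dist_commute)
    then show "\<exists>y\<in>g ` S. dist y x0 < e"
      using \<open>s \<in> S\<close> by blast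
  qed
  moreover have "closed (g ` S)"
    by (intro compact_imp_closed compact_continuous_image assms(1,2))
  ultimately show ?thesis
    by (simp add: closure_closed)
qed

lemma (in finite_measure) limsup_measure_le_measure_limsup:
  assumes "range A \<subseteq> sets M"
  shows "limsup (\<lambda>k. ereal (measure M (A k))) \<le> ereal (measure M (limsup A))"
proof -
  define B where "B n = (\<Union>k\<in>{n..}. A k)" for n
  have B_sets: "range B \<subseteq> sets M"
    using assms unfolding B_def by blast
  have "decseq B"
    unfolding B_def decseq_def by force
  have limsup_eq: "limsup A = (\<Inter>n. B n)"
    unfolding B_def limsup_INF_SUP by simp
  have "limsup (\<lambda>k. ereal (measure M (A k))) \<le> ereal (measure M (B n))" for n
  proof -
    have "limsup (\<lambda>k. ereal (measure M (A k))) \<le> (SUP k\<in>{n..}. ereal (measure M (A k)))"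
      unfolding limsup_INF_SUP by (rule INF_lower) simp
    also have "\<dots> \<le> ereal (measure M (B n))"
      using B_sets by (intro SUP_least) (auto simp: B_def intro!: finite_measure_mono)
    finally show ?thesis .
  qed
  moreover have "(\<lambda>n. ereal (measure M (B n))) \<longlonglongrightarrow> ereal (measure M (\<Inter>n. B n))"
    using finite_Lim_measure_decseq[OF B_sets \<open>decseq B\<close>] by simp
  ultimately show ?thesis
    unfolding limsup_eq by (intro LIMSEQ_le_const[of "\<lambda>n. ereal (measure M (B n))"]) auto
qed

lemma finite_measure_completion:
  assumes "finite_measure M"
  shows "finite_measure (completion M)"
  using finite_measure.emeasure_finite[OF assms, of "space M"] by (intro finite_measureI) simp

lemma pattern_unif_conv_AE_continuous_uniform_limit:
  assumes "irrigation_pattern P X" "pattern_unif_conv P Xs X"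
  shows "AE q in P. continuous_on {0..1} (X q) \<and> uniform_limit {0..1} (\<lambda>k. Xs k q) (X q) sequentially"
proof -
  have "AE q in P. abs_cont_on 0 1 (X q)" "AE q in P. uniform_limit {0..1} (\<lambda>k. Xs k q) (X q) sequentially"
    using assms unfolding irrigation_pattern_def pattern_unif_conv_def by auto
  then show ?thesis
    by eventually_elim (simp add: abs_cont_on_imp_continuous_on)
qed

lemma multiplicity_pat_limsup_le:
  fixes Xs :: "nat \<Rightarrow> 'a::polish_space \<Rightarrow> real \<Rightarrow> 'b::euclidean_space"
  assumes sP: "sets P = sets borel" and "finite_measure P"
    and Xs: "\<And>k. irrigation_pattern P (Xs k)" and X: "irrigation_pattern P X"
    and conv: "pattern_unif_conv P Xs X" and "xs \<longlonglongrightarrow> x"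
  shows "limsup (\<lambda>k. ereal (multiplicity_pat P (Xs k) (xs k))) \<le> ereal (multiplicity_pat P X x)"
proof -
  interpret M: finite_measure "completion P"
    using \<open>finite_measure P\<close> by (rule finite_measure_completion)
  define A where "A k = {q \<in> space P. xs k \<in> Xs k q ` {0..1}}" for k
  define A0 where "A0 = {q \<in> space P. x \<in> X q ` {0..1}}"
  have A_sets: "range A \<subseteq> sets (completion P)"
    unfolding A_def using irrigation_pattern_fibres_through_sets_completion[OF sP Xs] by blast
  from pattern_unif_conv_AE_continuous_uniform_limit[OF X conv]
  have "AE q in P. q \<in> limsup A \<longrightarrow> q \<in> A0"
  proof eventually_elim
    case (elim q)
    show "q \<in> limsup A \<longrightarrow> q \<in> A0"
    proof
      assume "q \<in> limsup A"
      then have "q \<in> space P" "\<exists>\<^sub>F k in sequentially. xs k \<in> Xs k q ` {0..1}"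
        by (auto simp: A_def limsup_INF_SUP frequently_sequentially Bex_def)
      with elim show "q \<in> A0"
        unfolding A0_def
        using mem_image_if_frequently_mem_image_uniform_limit[OF compact_Icc _ _ \<open>xs \<longlonglongrightarrow> x\<close>] by blast
    qed
  qed
  then have "AE q in completion P. q \<in> limsup A \<longrightarrow> q \<in> A0"
    by (rule AE_completion)
  have "limsup (\<lambda>k. ereal (measure (completion P) (A k))) \<le> ereal (measure (completion P) (limsup A))"
    using A_sets by (rule M.limsup_measure_le_measure_limsup)
  also have "\<dots> \<le> ereal (measure (completion P) A0)"
    using \<open>AE q in completion P. q \<in> limsup A \<longrightarrow> q \<in> A0\<close>
      irrigation_pattern_fibres_through_sets_completion[OF sP X]
    unfolding A0_def by (simp add: M.finite_measure_mono_AE)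
  finally show ?thesis
    unfolding multiplicity_pat_def A_def A0_def .
qed

theorem mainTheorem13:
  fixes P :: "('a::polish_space) measure"
    and Xs :: "nat \<Rightarrow> 'a \<Rightarrow> real \<Rightarrow> 'b::euclidean_space"
    and X :: "'a \<Rightarrow> real \<Rightarrow> 'b"
    and ts :: "nat \<Rightarrow> real" and t :: real
  assumes "reference_space P"
    and "\<And>k. irrigation_pattern P (Xs k)"
    and "irrigation_pattern P X"
    and "pattern_unif_conv P Xs X"
    and "\<And>k. ts k \<in> {0..1}"
    and "ts \<longlonglongrightarrow> t"
  shows "AE p in P. ereal (multiplicity_pat P X (X p t))
           \<ge> limsup (\<lambda>k. ereal (multiplicity_pat P (Xs k) (Xs k p (ts k))))"
proof -
  have sP: "sets P = sets borel" and "finite_measure P"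
    using assms(1) unfolding reference_space_def by auto
  have "t \<in> {0..1}"
    using closed_sequentially[OF closed_atLeastAtMost _ assms(6)] assms(5) by blast
  have ts_in: "\<forall>\<^sub>F k in sequentially. ts k \<in> {0..1}"
    using assms(5) by (simp add: always_eventually)
  from pattern_unif_conv_AE_continuous_uniform_limit[OF assms(3,4)]
  show ?thesis
  proof (rule eventually_mono)
    fix p assume "continuous_on {0..1} (X p) \<and> uniform_limit {0..1} (\<lambda>k. Xs k p) (X p) sequentially"
    then have "(\<lambda>k. Xs k p (ts k)) \<longlonglongrightarrow> X p t"
      using tendsto_uniform_limit_compose[OF _ _ assms(6) ts_in \<open>t \<in> {0..1}\<close>] by blast
    then show "limsup (\<lambda>k. ereal (multiplicity_pat P (Xs k) (Xs k p (ts k)))) \<le> ereal (multiplicity_pat P X (X p t))"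
      by (rule multiplicity_pat_limsup_le[OF sP \<open>finite_measure P\<close> assms(2-4)])
  qed
qed

end
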